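(* Let $p,q\in\mathbb N$ and $A\in\mathrm{Rec}_{p\times q}(\mathbb Q)$. Then there exists a non-zero natural integer $N$ such that $N^{n+1}A[U,W]\in\mathbb Z$ for all $n\in\mathbb N$ and all $(U,W)\in\mathcal M_{p\times q}^n$.
   Context: $\mathcal M_{p\times q}^n$ is the set of pairs $(U,W)$ of words of common length $n$ with $U\in\{0,\dots,p-1\}^n$, $W\in\{0,\dots,q-1\}^n$, $\mathcal M_{p\times q}=\bigcup_n\mathcal M_{p\times q}^n$. For $A:\mathcal M_{p\times q}\to\mathbb Q$ (values $A[U,W]$), $(\rho(S,T)A)[U,W]=A[US,WT]$. $\mathrm{Rec}_{p\times q}(\mathbb Q)$ is the set of $A$ whose linear span of $\{\rho(S,T)A\}$ is finite-dimensional. *)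

theory Defs
  imports Complex_Main
begin

definition Mn :: "nat \<Rightarrow> nat \<Rightarrow> nat \<Rightarrow> (nat list \<times> nat list) set" where
  "Mn p q n = {(U, W). length U = n \<and> length W = n \<and> set U \<subseteq> {..<p} \<and> set W \<subseteq> {..<q}}"

definition Mall :: "nat \<Rightarrow> nat \<Rightarrow> (nat list \<times> nat list) set" where
  "Mall p q = (\<Union>n. Mn p q n)"

definition rho :: "nat list \<Rightarrow> nat list \<Rightarrow> (nat list \<times> nat list \<Rightarrow> rat) \<Rightarrow> (nat list \<times> nat list \<Rightarrow> rat)" where
  "rho S T A = (\<lambda>(U, W). A (U @ S, W @ T))"

text \<open>A is recognizable iff the Q-linear span of the functions rho S T A (as functions on
  Mall p q) is finite-dimensional, i.e. contained in the span of finitely many functions.\<close>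
definition Rec :: "nat \<Rightarrow> nat \<Rightarrow> (nat list \<times> nat list \<Rightarrow> rat) \<Rightarrow> bool" where
  "Rec p q A \<longleftrightarrow> (\<exists>F :: (nat list \<times> nat list \<Rightarrow> rat) set. finite F \<and>
     (\<forall>(S, T) \<in> Mall p q. \<exists>c :: (nat list \<times> nat list \<Rightarrow> rat) \<Rightarrow> rat.
        \<forall>(U, W) \<in> Mall p q. rho S T A (U, W) = (\<Sum>f\<in>F. c f * f (U, W))))"

end

theory Submission
  imports Defs "HOL-Library.Function_Algebras"
begin

text \<open>The span of the shifts \<open>\<rho>(S,T)A\<close> is finite-dimensional, so finitely many shifts
  \<open>A\<^sub>1 = A, \<dots>, A\<^sub>k\<close> span it. Splitting off the last letters gives
  \<open>A\<^sub>i[Ux, Wy] = (\<rho>(x,y)A\<^sub>i)[U, W] = \<Sum>\<^sub>j c\<^sub>i\<^sub>j\<^sup>x\<^sup>y A\<^sub>j[U, W]\<close>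
  with finitely many rational coefficients. If \<open>N\<close> clears the denominators of all
  \<open>c\<^sub>i\<^sub>j\<^sup>x\<^sup>y\<close> and of the values \<open>A\<^sub>i[\<epsilon>, \<epsilon>]\<close>, induction on \<open>n\<close> shows
  \<open>N\<^sup>n\<^sup>+\<^sup>1 A\<^sub>i[U, W] \<in> \<int>\<close> for all words of length \<open>n\<close>.\<close>

definition pointwise_scale :: "'k::field \<Rightarrow> ('a \<Rightarrow> 'k) \<Rightarrow> 'a \<Rightarrow> 'k" where
  "pointwise_scale c f = (\<lambda>x. c * f x)"

interpretation fun_space: vector_space pointwise_scale
  by unfold_locales (auto simp: pointwise_scale_def fun_eq_iff algebra_simps)

lemma sum_fun_apply: "(\<Sum>i\<in>I. f i) x = (\<Sum>i\<in>I. f i x)"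
  by (induction I rule: infinite_finite_induct) auto

lemma (in vector_space) finite_spanning_subset:
  assumes "finite F" and "V \<subseteq> span F"
  obtains B where "B \<subseteq> V" and "finite B" and "V \<subseteq> span B"
proof -
  obtain B where "B \<subseteq> V" and "independent B" and "V \<subseteq> span B"
    using maximal_independent_subset by blast
  moreover have "finite B"
    using independent_span_bound[OF assms(1) \<open>independent B\<close>] \<open>B \<subseteq> V\<close> assms(2) by blast
  ultimately show ?thesis using that by blast
qed

lemma (in module) span_image_finite_sum:
  assumes "finite I" and "v \<in> span (g ` I)"
  obtains c where "v = (\<Sum>i\<in>I. c i *s g i)"
proof -
  from assms(2) have "\<exists>c. v = (\<Sum>i\<in>I. c i *s g i)"
  proof (induction rule: span_induct_alt)
    case base
    show ?case by (intro exI[of _ "\<lambda>_. 0"]) simp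
  next
    case (step a w u)
    then obtain j c where "j \<in> I" "w = g j" "u = (\<Sum>i\<in>I. c i *s g i)" by blast
    then have "a *s w + u = (\<Sum>i\<in>I. (c i + (if i = j then a else 0)) *s g i)"
      using assms(1)
      by (simp add: scale_left_distrib sum.distrib if_distrib[of "\<lambda>r. r *s _"] sum.delta
          add.commute cong: if_cong)
    then show ?case by metis
  qed
  with that show ?thesis by blast
qed

lemma common_denominator:
  assumes "finite (Q :: rat set)"
  obtains D :: nat where "D > 0" and "\<And>r. r \<in> Q \<Longrightarrow> of_nat D * r \<in> \<int>"
  using assms
proof (induction Q arbitrary: thesis rule: finite_induct)
  case empty
  then show ?case by (metis empty_iff zero_less_one)
next
  case (insert r Q)
  obtain D :: nat where D: "D > 0" "\<And>s. s \<in> Q \<Longrightarrow> of_nat D * s \<in> \<int>"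
    using insert.IH by blast
  obtain a b where "quotient_of r = (a, b)" by (cases "quotient_of r")
  then have "b > 0" and r: "r = of_int a / of_int b"
    by (simp_all add: quotient_of_denom_pos quotient_of_div)
  have "of_nat (D * nat b) * s \<in> \<int>" if "s \<in> insert r Q" for s
  proof (cases "s = r")
    case True
    then have "of_nat (D * nat b) * s = of_nat D * of_int a"
      using \<open>b > 0\<close> by (simp add: r)
    then show ?thesis by (metis Ints_mult Ints_of_int Ints_of_nat)
  next
    case False
    then have "of_nat (D * nat b) * s = of_int b * (of_nat D * s)"
      using \<open>b > 0\<close> by simp
    then show ?thesis using D(2) False that by (metis Ints_mult Ints_of_int insertE)
  qed
  then show ?case using D(1) \<open>b > 0\<close> by (intro insert.prems[of "D * nat b"]) auto
qed

lemma Mall_iff: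
  "(U, W) \<in> Mall p q \<longleftrightarrow> length U = length W \<and> set U \<subseteq> {..<p} \<and> set W \<subseteq> {..<q}"
  unfolding Mall_def Mn_def by auto

lemma Cons_in_Mall: "(S, T) \<in> Mall p q \<Longrightarrow> x < p \<Longrightarrow> y < q \<Longrightarrow> (x # S, y # T) \<in> Mall p q"
  by (simp add: Mall_iff)

lemma Mn_subset_Mall: "Mn p q n \<subseteq> Mall p q"
  unfolding Mall_def by blast

lemma Mn_0: "Mn p q 0 = {([], [])}"
  unfolding Mn_def by auto

lemma Mn_SucE:
  assumes "(U, W) \<in> Mn p q (Suc n)"
  obtains U' x W' y where "U = U' @ [x]" and "W = W' @ [y]" and "x < p" and "y < q"
    and "(U', W') \<in> Mn p q n"
proof -
  have "U \<noteq> []" and "W \<noteq> []" using assms by (auto simp: Mn_def)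
  then have "U = butlast U @ [last U]" and "W = butlast W @ [last W]" by simp_all
  with assms last_in_set[OF \<open>U \<noteq> []\<close>] last_in_set[OF \<open>W \<noteq> []\<close>] show ?thesis
    by (intro that[of "butlast U" "last U" "butlast W" "last W"])
      (auto simp: Mn_def dest: in_set_butlastD)
qed

lemma rho_Nil_Nil: "rho [] [] A = A"
  by (simp add: rho_def)

lemma rho_at_Nil_Nil: "rho S T A ([], []) = A (S, T)"
  by (simp add: rho_def)

lemma rho_snoc: "rho S T A (U @ [x], W @ [y]) = rho (x # S) (y # T) A (U, W)"
  by (simp add: rho_def)

lemma Ints_power_denominator_by_last_letter:
  fixes g :: "'i \<Rightarrow> nat list \<times> nat list \<Rightarrow> rat" and c :: "'i \<Rightarrow> nat \<Rightarrow> nat \<Rightarrow> 'i \<Rightarrow> rat"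
    and D :: nat
  assumes empty_word: "\<And>i. i \<in> I \<Longrightarrow> of_nat D * g i ([], []) \<in> \<int>"
    and coeffs: "\<And>i x y j. i \<in> I \<Longrightarrow> x < p \<Longrightarrow> y < q \<Longrightarrow> j \<in> I \<Longrightarrow> of_nat D * c i x y j \<in> \<int>"
    and expansion: "\<And>i x y U W. i \<in> I \<Longrightarrow> x < p \<Longrightarrow> y < q \<Longrightarrow> (U, W) \<in> Mall p q \<Longrightarrow>
      g i (U @ [x], W @ [y]) = (\<Sum>j\<in>I. c i x y j * g j (U, W))"
    and "i \<in> I" and "(U, W) \<in> Mn p q n"
  shows "of_nat D ^ (n + 1) * g i (U, W) \<in> \<int>"
  using assms(4,5)
proof (induction n arbitrary: i U W)
  case 0
  then show ?case using empty_word by (simp add: Mn_0)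
next
  case (Suc n)
  from Suc.prems(2) obtain U' x W' y where UW: "U = U' @ [x]" "W = W' @ [y]"
    and xy: "x < p" "y < q" and UW': "(U', W') \<in> Mn p q n"
    by (rule Mn_SucE)
  have "(U', W') \<in> Mall p q"
    using UW' Mn_subset_Mall by blast
  then have "of_nat D ^ (Suc n + 1) * g i (U, W)
      = (\<Sum>j\<in>I. (of_nat D * c i x y j) * (of_nat D ^ (n + 1) * g j (U', W')))"
    by (simp add: UW expansion[OF Suc.prems(1) xy] sum_distrib_left algebra_simps)
  also have "\<dots> \<in> \<int>"
    using coeffs[OF Suc.prems(1) xy] UW' by (intro Ints_sum Ints_mult[OF _ Suc.IH]) auto
  finally show ?case .
qed

lemma last_letter_expansion_common_denominator:
  fixes g :: "'i \<Rightarrow> nat list \<times> nat list \<Rightarrow> rat"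
  assumes "finite I"
    and expansion: "\<And>i x y. i \<in> I \<Longrightarrow> x < p \<Longrightarrow> y < q \<Longrightarrow>
      \<exists>c. \<forall>(U, W) \<in> Mall p q. g i (U @ [x], W @ [y]) = (\<Sum>j\<in>I. c j * g j (U, W))"
  obtains D :: nat where "D > 0"
    and "\<And>i n U W. i \<in> I \<Longrightarrow> (U, W) \<in> Mn p q n \<Longrightarrow> of_nat D ^ (n + 1) * g i (U, W) \<in> \<int>"
proof -
  define c where "c i x y = (SOME c. \<forall>(U, W) \<in> Mall p q.
      g i (U @ [x], W @ [y]) = (\<Sum>j\<in>I. c j * g j (U, W)))" for i x y
  have c: "\<forall>(U, W) \<in> Mall p q. g i (U @ [x], W @ [y]) = (\<Sum>j\<in>I. c i x y j * g j (U, W))"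
    if "i \<in> I" "x < p" "y < q" for i x y
    unfolding c_def by (rule someI_ex[OF expansion[OF that]])
  let ?Q = "(\<lambda>(i, x, y, j). c i x y j) ` (I \<times> {..<p} \<times> {..<q} \<times> I) \<union> (\<lambda>i. g i ([], [])) ` I"
  obtain D :: nat where "D > 0" and D: "\<And>r. r \<in> ?Q \<Longrightarrow> of_nat D * r \<in> \<int>"
    using common_denominator[of ?Q] \<open>finite I\<close> by blast
  have "of_nat D ^ (n + 1) * g i (U, W) \<in> \<int>" if "i \<in> I" "(U, W) \<in> Mn p q n" for i n U W
  proof (rule Ints_power_denominator_by_last_letter[where c = c, OF _ _ _ that])
    show "of_nat D * g i ([], []) \<in> \<int>" if "i \<in> I" for i
      using D that by blast
    show "of_nat D * c i x y j \<in> \<int>" if "i \<in> I" "x < p" "y < q" "j \<in> I" for i x y j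
      using D that by force
    show "g i (U @ [x], W @ [y]) = (\<Sum>j\<in>I. c i x y j * g j (U, W))"
      if "i \<in> I" "x < p" "y < q" "(U, W) \<in> Mall p q" for i x y U W
      using c[OF that(1-3)] that(4) by blast
  qed
  with \<open>D > 0\<close> show thesis by (rule that)
qed

definition zero_outside :: "'a set \<Rightarrow> ('a \<Rightarrow> 'b::zero) \<Rightarrow> 'a \<Rightarrow> 'b" where
  "zero_outside M f x = (if x \<in> M then f x else 0)"

lemma Rec_shifts_finite_span:
  assumes "Rec p q A"
  obtains F where "finite F"
    and "(\<lambda>(S, T). zero_outside (Mall p q) (rho S T A)) ` Mall p q \<subseteq> fun_space.span F"
proof -
  obtain F where "finite F" and F: "\<forall>(S, T) \<in> Mall p q. \<exists>c. \<forall>(U, W) \<in> Mall p q.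
      rho S T A (U, W) = (\<Sum>f\<in>F. c f * f (U, W))"
    using assms unfolding Rec_def by blast
  let ?restr = "zero_outside (Mall p q)"
  have "?restr (rho S T A) \<in> fun_space.span (?restr ` F)" if ST: "(S, T) \<in> Mall p q" for S T
  proof -
    obtain c where c: "\<forall>(U, W) \<in> Mall p q. rho S T A (U, W) = (\<Sum>f\<in>F. c f * f (U, W))"
      using F ST by blast
    have "?restr (rho S T A) = (\<Sum>f\<in>F. pointwise_scale (c f) (?restr f))"
      using c by (auto simp: zero_outside_def pointwise_scale_def sum_fun_apply fun_eq_iff)
    also have "\<dots> \<in> fun_space.span (?restr ` F)"
      by (intro fun_space.span_sum fun_space.span_scale fun_space.span_base) auto
    finally show ?thesis .
  qed
  then have "(\<lambda>(S, T). ?restr (rho S T A)) ` Mall p q \<subseteq> fun_space.span (?restr ` F)"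
    by auto
  with finite_imageI[OF \<open>finite F\<close>] show thesis by (rule that)
qed

lemma Rec_finite_shift_generators:
  assumes "Rec p q A"
  obtains K where "finite K" and "K \<subseteq> Mall p q" and "([], []) \<in> K"
    and "\<forall>(S, T) \<in> Mall p q. \<exists>c. \<forall>(U, W) \<in> Mall p q.
      rho S T A (U, W) = (\<Sum>(S', T')\<in>K. c (S', T') * rho S' T' A (U, W))"
proof -
  define G where "G = (\<lambda>(S, T). zero_outside (Mall p q) (rho S T A))"
  obtain F where "finite F" and "G ` Mall p q \<subseteq> fun_space.span F"
    using Rec_shifts_finite_span[OF assms] unfolding G_def by blast
  then obtain B where "B \<subseteq> G ` Mall p q" and "finite B" and "G ` Mall p q \<subseteq> fun_space.span B"
    by (rule fun_space.finite_spanning_subset)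
  then obtain K0 where "K0 \<subseteq> Mall p q" and "finite K0" and "B = G ` K0"
    using finite_subset_image[of B G "Mall p q"] by blast
  define K where "K = insert ([], []) K0"
  have K: "finite K" "K \<subseteq> Mall p q" "([], []) \<in> K"
    using \<open>K0 \<subseteq> Mall p q\<close> \<open>finite K0\<close> by (auto simp: K_def Mall_iff)
  have span_K: "G ` Mall p q \<subseteq> fun_space.span (G ` K)"
    using \<open>G ` Mall p q \<subseteq> fun_space.span B\<close> fun_space.span_mono[of B "G ` K"]
    by (auto simp: \<open>B = G ` K0\<close> K_def)
  have "\<exists>c. \<forall>(U, W) \<in> Mall p q.
      rho S T A (U, W) = (\<Sum>(S', T')\<in>K. c (S', T') * rho S' T' A (U, W))"
    if "(S, T) \<in> Mall p q" for S T
  proof -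
    have "G (S, T) \<in> fun_space.span (G ` K)"
      using that span_K by blast
    then obtain c where c: "G (S, T) = (\<Sum>k\<in>K. pointwise_scale (c k) (G k))"
      by (rule fun_space.span_image_finite_sum[OF \<open>finite K\<close>])
    have "rho S T A (U, W) = (\<Sum>(S', T')\<in>K. c (S', T') * rho S' T' A (U, W))"
      if "(U, W) \<in> Mall p q" for U W
      using fun_cong[OF c, of "(U, W)"] that
      by (simp add: G_def zero_outside_def pointwise_scale_def sum_fun_apply split_def)
    then show ?thesis by blast
  qed
  with K show thesis by (intro that) auto
qed

theorem mainTheorem9:
  fixes p q :: nat and A :: "nat list \<times> nat list \<Rightarrow> rat"
  assumes "Rec p q A"
  shows "\<exists>N::nat. N \<noteq> 0 \<and>
           (\<forall>n. \<forall>(U, W) \<in> Mn p q n. (of_nat N) ^ (n + 1) * A (U, W) \<in> \<int>)"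
proof -
  obtain K where "finite K" and "K \<subseteq> Mall p q" and "([], []) \<in> K"
    and span: "\<forall>(S, T) \<in> Mall p q. \<exists>c. \<forall>(U, W) \<in> Mall p q.
      rho S T A (U, W) = (\<Sum>(S', T')\<in>K. c (S', T') * rho S' T' A (U, W))"
    using assms by (rule Rec_finite_shift_generators)
  define g where "g = (\<lambda>(S, T). rho S T A)"
  have "\<exists>c. \<forall>(U, W) \<in> Mall p q. g k (U @ [x], W @ [y]) = (\<Sum>j\<in>K. c j * g j (U, W))"
    if "k \<in> K" "x < p" "y < q" for k x y
  proof -
    obtain S T where k: "k = (S, T)" by fastforce
    have "(x # S, y # T) \<in> Mall p q"
      using that \<open>K \<subseteq> Mall p q\<close> by (auto simp: k intro: Cons_in_Mall)
    then show ?thesis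
      using span by (fastforce simp: g_def k rho_snoc split_def)
  qed
  then obtain D :: nat where "D > 0"
    and D: "\<And>k n U W. k \<in> K \<Longrightarrow> (U, W) \<in> Mn p q n \<Longrightarrow> of_nat D ^ (n + 1) * g k (U, W) \<in> \<int>"
    using last_letter_expansion_common_denominator[OF \<open>finite K\<close>] by blast
  show ?thesis
    using \<open>D > 0\<close> D[OF \<open>([], []) \<in> K\<close>] by (auto simp: g_def rho_Nil_Nil)
qed

end
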